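(* Let $E$ be a Hermite–Biehler entire function with no real zeros whose phase function satisfies $\varphi'\in L^\infty(\mathbb{R})$. There exists $\delta>0$, depending only on $\lVert\varphi'\rVert_\infty$, such that for every $\xi\in\mathbb{R}$ and every $\alpha\in[0,\pi)$ with $\lvert A_\alpha(\xi)\rvert=\lvert E(\xi)\rvert$ there is an interval $I=(a,b)$ containing $\xi$ with $\xi-a>\delta$, $b-\xi>\delta$, and $$\left\lvert\frac{A_\alpha(x)}{E(x)}\right\rvert^2\ge\frac12,\qquad x\in I.$$
   Context: An entire function $E$ is Hermite–Biehler if $\lvert E(\overline{z})\rvert < \lvert E(z)\rvert$ for $z$ in the upper half-plane $\mathbb{C}_+$. Let $E^{\#}(z)=\overline{E(\overline z)}$; the phase function $\varphi$ is a smooth real function on $\mathbb{R}$ with $E^{\#}(x)/E(x)=e^{i\varphi(x)}$ (equivalently $\varphi=-2\arg E$ on $\mathbb{R}$). For $\alpha\in\mathbb{R}$, $A_\alpha=(e^{i\alpha}E+e^{-i\alpha}E^{\#})/2$ is the real part of $e^{i\alpha}E$. *)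

theory Defs
  imports "HOL-Complex_Analysis.Complex_Analysis"
begin

definition hermite_biehler :: "(complex \<Rightarrow> complex) \<Rightarrow> bool" where
  "hermite_biehler E \<longleftrightarrow> E holomorphic_on UNIV \<and>
     (\<forall>z. Im z > 0 \<longrightarrow> cmod (E (cnj z)) < cmod (E z))"

definition sharp :: "(complex \<Rightarrow> complex) \<Rightarrow> complex \<Rightarrow> complex" where
  "sharp E z = cnj (E (cnj z))"

definition A_alpha :: "(complex \<Rightarrow> complex) \<Rightarrow> real \<Rightarrow> complex \<Rightarrow> complex" where
  "A_alpha E \<alpha> z = (cis \<alpha> * E z + cis (-\<alpha>) * sharp E z) / 2"

end

theory Submission
  imports Defs
begin

text \<open>On the real line \<open>E\<^sup>#/E = cis \<phi>\<close>, so \<open>|A\<^sub>\<alpha>/E|\<^sup>2 = (1 + cos (\<phi> - 2\<alpha>))/2\<close>.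
  The hypothesis \<open>|A\<^sub>\<alpha>(\<xi>)| = |E(\<xi>)|\<close> says that \<open>\<phi>(\<xi>) - 2\<alpha>\<close> is a multiple of
  \<open>2\<pi>\<close>, and the ratio stays at least 1/2 as long as \<open>\<phi>\<close> moves by at most \<open>\<pi>/2\<close>.
  Since \<open>\<phi>\<close> is \<open>M\<close>-Lipschitz with \<open>M = sup |\<phi>'|\<close>, this holds on the interval of
  radius \<open>1/(M + 1)\<close> around \<open>\<xi>\<close>.\<close>

lemma norm_A_alpha_div_sq:
  assumes "E z \<noteq> 0" and "sharp E z / E z = cis p"
  shows "(cmod (A_alpha E \<alpha> z / E z))\<^sup>2 = (1 + cos (p - 2 * \<alpha>)) / 2"
proof -
  have "sharp E z = cis p * E z"
    using assms by (simp add: field_simps)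
  then have "A_alpha E \<alpha> z / E z = (cis \<alpha> + cis (-\<alpha>) * cis p) / 2"
    using assms(1) unfolding A_alpha_def by (simp add: field_simps)
  also have "\<dots> = cis \<alpha> * (1 + cis (p - 2 * \<alpha>)) / 2"
    by (simp add: distrib_left cis_mult)
  finally have ratio: "A_alpha E \<alpha> z / E z = cis \<alpha> * (1 + cis (p - 2 * \<alpha>)) / 2" .
  have "(cmod (1 + cis (p - 2 * \<alpha>)))\<^sup>2 = (1 + cos (p - 2 * \<alpha>))\<^sup>2 + (sin (p - 2 * \<alpha>))\<^sup>2"
    by (simp add: cmod_power2)
  also have "\<dots> = 2 + 2 * cos (p - 2 * \<alpha>)"
    using sin_cos_squared_add[of "p - 2 * \<alpha>"] by (simp add: power2_eq_square algebra_simps)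
  finally show ?thesis
    unfolding ratio by (simp add: norm_mult norm_divide power_divide)
qed

lemma cos_nonneg_near_cos_eq_1:
  fixes \<theta> \<theta>\<^sub>0 :: real
  assumes "cos \<theta>\<^sub>0 = 1" and "\<bar>\<theta> - \<theta>\<^sub>0\<bar> \<le> pi / 2"
  shows "0 \<le> cos \<theta>"
proof -
  have "sin \<theta>\<^sub>0 = 0"
    using sin_cos_squared_add[of \<theta>\<^sub>0] assms(1) by simp
  then have "cos \<theta> = cos (\<theta> - \<theta>\<^sub>0)"
    using cos_diff[of \<theta> \<theta>\<^sub>0] cos_add[of "\<theta> - \<theta>\<^sub>0" \<theta>\<^sub>0] assms(1) by simp
  also have "\<dots> \<ge> 0"
    using assms(2) unfolding abs_le_iff by (intro cos_ge_zero) linarith+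
  finally show ?thesis .
qed

lemma abs_le_SUP_abs:
  fixes f :: "'a \<Rightarrow> real"
  assumes "bounded (range f)"
  shows "\<bar>f x\<bar> \<le> (SUP y. \<bar>f y\<bar>)"
proof (rule cSUP_upper)
  from assms obtain B where "\<And>y. \<bar>f y\<bar> \<le> B"
    by (auto simp: bounded_iff)
  then show "bdd_above (range (\<lambda>y. \<bar>f y\<bar>))"
    by (rule bdd_aboveI2)
qed simp

lemma abs_diff_le_of_deriv_bound:
  fixes f f' :: "real \<Rightarrow> real"
  assumes "\<And>x. (f has_real_derivative f' x) (at x)" and "\<And>x. \<bar>f' x\<bar> \<le> L"
  shows "\<bar>f x - f y\<bar> \<le> L * \<bar>x - y\<bar>"
  using field_differentiable_bound[OF convex_UNIV, of f f' L x y] assms by simp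

theorem lemma7:
  fixes M :: real
  shows "\<exists>\<delta>>0. \<forall>(E :: complex \<Rightarrow> complex) (\<phi> :: real \<Rightarrow> real) (\<phi>' :: real \<Rightarrow> real).
     hermite_biehler E \<and>
     (\<forall>x::real. E (complex_of_real x) \<noteq> 0) \<and>
     (\<forall>x. (\<phi> has_real_derivative \<phi>' x) (at x)) \<and>
     (\<forall>x::real. sharp E (complex_of_real x) / E (complex_of_real x) = cis (\<phi> x)) \<and>
     bounded (range \<phi>') \<and> (SUP x. \<bar>\<phi>' x\<bar>) = M
     \<longrightarrow> (\<forall>\<xi>::real. \<forall>\<alpha>\<in>{0..<pi}.
            cmod (A_alpha E \<alpha> (complex_of_real \<xi>)) = cmod (E (complex_of_real \<xi>)) \<longrightarrow>
            (\<exists>a b. \<xi> - a > \<delta> \<and> b - \<xi> > \<delta> \<and>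
               (\<forall>x\<in>{a<..<b}. (cmod (A_alpha E \<alpha> (complex_of_real x) / E (complex_of_real x)))\<^sup>2 \<ge> 1/2)))"
proof (rule exI[of _ "1 / (2 * (\<bar>M\<bar> + 1))"], intro conjI allI impI ballI)
  define r where "r = 1 / (\<bar>M\<bar> + 1)"
  show "0 < 1 / (2 * (\<bar>M\<bar> + 1))"
    by (simp add: add_pos_nonneg)
  fix E \<phi> \<phi>' \<xi> \<alpha>
  assume H: "hermite_biehler E \<and> (\<forall>x::real. E (complex_of_real x) \<noteq> 0) \<and>
     (\<forall>x. (\<phi> has_real_derivative \<phi>' x) (at x)) \<and>
     (\<forall>x::real. sharp E (complex_of_real x) / E (complex_of_real x) = cis (\<phi> x)) \<and>
     bounded (range \<phi>') \<and> (SUP x. \<bar>\<phi>' x\<bar>) = M"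
    and "\<alpha> \<in> {0..<pi}"
    and on_circle: "cmod (A_alpha E \<alpha> (complex_of_real \<xi>)) = cmod (E (complex_of_real \<xi>))"
  have ratio: "(cmod (A_alpha E \<alpha> (complex_of_real x) / E (complex_of_real x)))\<^sup>2
      = (1 + cos (\<phi> x - 2 * \<alpha>)) / 2" for x
    using H norm_A_alpha_div_sq by blast
  have "\<bar>\<phi>' x\<bar> \<le> \<bar>M\<bar>" for x
    using H abs_le_SUP_abs[of \<phi>' x] by auto
  then have lip: "\<bar>\<phi> x - \<phi> \<xi>\<bar> \<le> \<bar>M\<bar> * \<bar>x - \<xi>\<bar>" for x
    using H abs_diff_le_of_deriv_bound by blast
  have cos_\<xi>: "cos (\<phi> \<xi> - 2 * \<alpha>) = 1"
    using ratio[of \<xi>] on_circle H by (simp add: norm_divide)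
  show "\<exists>a b. \<xi> - a > 1 / (2 * (\<bar>M\<bar> + 1)) \<and> b - \<xi> > 1 / (2 * (\<bar>M\<bar> + 1)) \<and>
      (\<forall>x\<in>{a<..<b}. (cmod (A_alpha E \<alpha> (complex_of_real x) / E (complex_of_real x)))\<^sup>2 \<ge> 1/2)"
  proof (rule exI[of _ "\<xi> - r"], rule exI[of _ "\<xi> + r"], intro conjI ballI)
    show "\<xi> - (\<xi> - r) > 1 / (2 * (\<bar>M\<bar> + 1))" "\<xi> + r - \<xi> > 1 / (2 * (\<bar>M\<bar> + 1))"
      by (auto simp: r_def field_simps add_pos_nonneg)
    fix x assume "x \<in> {\<xi> - r<..<\<xi> + r}"
    then have "\<bar>M\<bar> * \<bar>x - \<xi>\<bar> \<le> \<bar>M\<bar> * r"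
      by (intro mult_left_mono) auto
    also have "\<dots> \<le> 1"
      by (simp add: r_def field_simps)
    finally have "\<bar>(\<phi> x - 2 * \<alpha>) - (\<phi> \<xi> - 2 * \<alpha>)\<bar> \<le> pi / 2"
      using lip[of x] pi_gt3 by linarith
    then have "0 \<le> cos (\<phi> x - 2 * \<alpha>)"
      by (rule cos_nonneg_near_cos_eq_1[OF cos_\<xi>])
    then show "(cmod (A_alpha E \<alpha> (complex_of_real x) / E (complex_of_real x)))\<^sup>2 \<ge> 1/2"
      by (simp add: ratio)
  qed
qed

end
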